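(* Let $G$ be a 3-regular graph with $m=3n/2$ edges and let $p=1$. Classify each edge $\langle jk\rangle$ of $G$ by the number $t\in\{0,1,2\}$ of vertices adjacent to both $j$ and $k$ (equivalently the number of triangles containing the edge). There are functions $F^{(0)},F^{(1)},F^{(2)}$ of $(\gamma_1,\beta_1)$, independent of $G$, such that for every such $G$ and all $(\gamma_1,\beta_1)$, $$F_1(\gamma_1,\beta_1)=m\Big[f_0\,F^{(0)}(\gamma_1,\beta_1)+f_1\,F^{(1)}(\gamma_1,\beta_1)+f_2\,F^{(2)}(\gamma_1,\beta_1)\Big],$$ where $f_t$ is the fraction of edges of $G$ of type $t$ (so $f_0+f_1+f_2=1$).
   Context: QAOA for MaxCut. For a graph $G$ on $n$ vertices (qubits) with edge set $E$, $|E|=m$, let $Z_j,X_j$ be the Pauli operators on qubit $j$. The cost operator is $C=\sum_{\langle jk\rangle\in E}C_{\langle jk\rangle}$ with $C_{\langle jk\rangle}=\tfrac12(1-Z_jZ_k)$; set $B=\sum_{j=1}^n X_j$, $U(C,\gamma)=e^{-i\gamma C}$, $U(B,\beta)=e^{-i\beta B}$, and $|s\rangle=2^{-n/2}\sum_{z\in\{0,1\}^n}|z\rangle$. For $p=1$, $|\gamma_1,\beta_1\rangle=U(B,\beta_1)U(C,\gamma_1)|s\rangle$ and $F_1(\gamma_1,\beta_1)=\langle\gamma_1,\beta_1|C|\gamma_1,\beta_1\rangle$. *)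

theory Defs
  imports Complex_Main
begin

text \<open>n-qubit operators, qubits indexed by 0..n-1. A computational basis state z in {0,1}^n
  is represented by the set of qubits in state 1, a subset of {..<n}.\<close>

type_synonym qmat = "nat set \<Rightarrow> nat set \<Rightarrow> complex"
type_synonym qvec = "nat set \<Rightarrow> complex"

definition basis :: "nat \<Rightarrow> nat set set" where
  "basis n = Pow {..<n}"

definition mid :: qmat where
  "mid x y = (if x = y then 1 else 0)"

definition mmult :: "nat \<Rightarrow> qmat \<Rightarrow> qmat \<Rightarrow> qmat" where
  "mmult n A B x y = (\<Sum>z\<in>basis n. A x z * B z y)"

definition madd :: "qmat \<Rightarrow> qmat \<Rightarrow> qmat" where
  "madd A B x y = A x y + B x y"

definition mscale :: "complex \<Rightarrow> qmat \<Rightarrow> qmat" where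
  "mscale c A x y = c * A x y"

definition msum :: "('a \<Rightarrow> qmat) \<Rightarrow> 'a set \<Rightarrow> qmat" where
  "msum f S x y = (\<Sum>a\<in>S. f a x y)"

fun mpow :: "nat \<Rightarrow> qmat \<Rightarrow> nat \<Rightarrow> qmat" where
  "mpow n A 0 = mid"
| "mpow n A (Suc k) = mmult n A (mpow n A k)"

definition mexp :: "nat \<Rightarrow> qmat \<Rightarrow> qmat" where
  "mexp n A x y = (\<Sum>k. mpow n A k x y / of_nat (fact k))"

definition mapply :: "nat \<Rightarrow> qmat \<Rightarrow> qvec \<Rightarrow> qvec" where
  "mapply n A v x = (\<Sum>y\<in>basis n. A x y * v y)"

definition pauliZ :: "nat \<Rightarrow> qmat" where
  "pauliZ j x y = (if x = y then (if j \<in> x then -1 else 1) else 0)"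

definition pauliX :: "nat \<Rightarrow> qmat" where
  "pauliX j x y = (if x = (if j \<in> y then y - {j} else insert j y) then 1 else 0)"

definition simple_graph :: "nat \<Rightarrow> (nat \<Rightarrow> nat \<Rightarrow> bool) \<Rightarrow> bool" where
  "simple_graph n adj \<longleftrightarrow> (\<forall>j k. adj j k \<longrightarrow> j < n \<and> k < n \<and> j \<noteq> k \<and> adj k j)"

definition regular3 :: "nat \<Rightarrow> (nat \<Rightarrow> nat \<Rightarrow> bool) \<Rightarrow> bool" where
  "regular3 n adj \<longleftrightarrow> simple_graph n adj \<and> (\<forall>j<n. card {k. adj j k} = 3)"

definition edges :: "(nat \<Rightarrow> nat \<Rightarrow> bool) \<Rightarrow> (nat \<times> nat) set" where
  "edges adj = {(j, k). j < k \<and> adj j k}"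

definition cost_op :: "nat \<Rightarrow> (nat \<Rightarrow> nat \<Rightarrow> bool) \<Rightarrow> qmat" where
  "cost_op n adj = msum (\<lambda>(j, k). mscale (1/2) (madd mid (mscale (-1) (mmult n (pauliZ j) (pauliZ k)))))
                        (edges adj)"

definition mixer_op :: "nat \<Rightarrow> qmat" where
  "mixer_op n = msum pauliX {..<n}"

definition U_op :: "nat \<Rightarrow> qmat \<Rightarrow> real \<Rightarrow> qmat" where
  "U_op n A t = mexp n (mscale (- (\<i> * complex_of_real t)) A)"

definition plus_state :: "nat \<Rightarrow> qvec" where
  "plus_state n x = complex_of_real (1 / sqrt (2 ^ n))"

definition qaoa_state :: "nat \<Rightarrow> (nat \<Rightarrow> nat \<Rightarrow> bool) \<Rightarrow> real \<Rightarrow> real \<Rightarrow> qvec" where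
  "qaoa_state n adj \<gamma> \<beta> =
     mapply n (U_op n (mixer_op n) \<beta>) (mapply n (U_op n (cost_op n adj) \<gamma>) (plus_state n))"

definition F1 :: "nat \<Rightarrow> (nat \<Rightarrow> nat \<Rightarrow> bool) \<Rightarrow> real \<Rightarrow> real \<Rightarrow> complex" where
  "F1 n adj \<gamma> \<beta> =
     (let \<psi> = qaoa_state n adj \<gamma> \<beta> in
        \<Sum>x\<in>basis n. cnj (\<psi> x) * mapply n (cost_op n adj) \<psi> x)"

definition edge_type :: "(nat \<Rightarrow> nat \<Rightarrow> bool) \<Rightarrow> nat \<times> nat \<Rightarrow> nat" where
  "edge_type adj e = card {u. adj (fst e) u \<and> adj (snd e) u}"

definition edge_frac :: "(nat \<Rightarrow> nat \<Rightarrow> bool) \<Rightarrow> nat \<Rightarrow> real" where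
  "edge_frac adj t = real (card {e \<in> edges adj. edge_type adj e = t}) / real (card (edges adj))"

end

theory Submission
  imports Defs "HOL-Analysis.Complex_Transcendental"
begin

text \<open>
  The cost operator is diagonal in the computational basis, and e^{-i\<beta>B} is the tensor product of
  the single-qubit rotations e^{-i\<beta>X_l}, because B is diagonalised by the Walsh characters.
  Writing F_1 as a sum over edges of expectations of (1 - Z_j Z_k)/2, the expectation for the edge
  <jk> is a double sum over basis states y, y' of the state after the cost layer; summing the
  rotation kernels over qubits other than j and k forces y and y' to agree there (unitarity).
  The phase difference between y and y' then only involves edges incident to j or k, and in a
  3-regular graph these are the edge itself, t pairs of edges to common neighbours and 2 - t
  edges to private neighbours at each endpoint. Summing out the remaining qubits leaves a
  function of \<gamma>, \<beta> and the type t of the edge alone.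
\<close>

lemma sum_Pow_prod:
  fixes h :: "'a \<Rightarrow> bool \<Rightarrow> 'b::comm_semiring_1"
  assumes "finite A"
  shows "(\<Sum>x\<in>Pow A. \<Prod>l\<in>A. h l (l \<in> x)) = (\<Prod>l\<in>A. h l True + h l False)"
proof -
  have "(\<Prod>l\<in>A. h l True + h l False) = (\<Sum>X\<in>Pow A. (\<Prod>l\<in>X. h l True) * (\<Prod>l\<in>A - X. h l False))"
    using prod_add[OF assms, of "\<lambda>l. h l True" "\<lambda>l. h l False"] by simp
  also have "\<dots> = (\<Sum>x\<in>Pow A. \<Prod>l\<in>A. h l (l \<in> x))"
  proof (rule sum.cong)
    fix X assume "X \<in> Pow A"
    then have "A \<inter> X = X" by auto
    moreover have "(\<Prod>l\<in>A - X. h l (l \<in> X)) = (\<Prod>l\<in>A - X. h l False)"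
      by (rule prod.cong) auto
    ultimately show "(\<Prod>l\<in>X. h l True) * (\<Prod>l\<in>A - X. h l False) = (\<Prod>l\<in>A. h l (l \<in> X))"
      using prod.Int_Diff[OF assms, of "\<lambda>l. h l (l \<in> X)" X] by simp
  qed simp
  finally show ?thesis by simp
qed

lemma sum_Pow_insert:
  assumes "finite B" "v \<notin> B"
  shows "(\<Sum>y\<in>Pow (insert v B). F y) = (\<Sum>y\<in>Pow B. F y + F (insert v y))"
proof -
  have "Pow B \<inter> insert v ` Pow B = {}" using assms by auto
  moreover have "inj_on (insert v) (Pow B)"
    using assms unfolding inj_on_def by (metis PowD insert_ident subsetD)
  ultimately show ?thesis
    using assms by (simp add: Pow_insert sum.union_disjoint sum.reindex sum.distrib)
qed

definition pair_bits :: "nat \<Rightarrow> nat \<Rightarrow> bool \<Rightarrow> bool \<Rightarrow> nat set" where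
  "pair_bits j k a b = (if a then {j} else {}) \<union> (if b then {k} else {})"

lemma pair_bits_mem:
  assumes "Y \<subseteq> A" "j \<notin> A" "k \<notin> A" "j \<noteq> k"
  shows "j \<in> Y \<union> pair_bits j k a b \<longleftrightarrow> a" "k \<in> Y \<union> pair_bits j k a b \<longleftrightarrow> b"
    "l \<in> A \<Longrightarrow> l \<in> Y \<union> pair_bits j k a b \<longleftrightarrow> l \<in> Y" "(Y \<union> pair_bits j k a b) \<inter> A = Y"
  using assms unfolding pair_bits_def by auto

lemma sum_Pow_insert_pair:
  assumes "finite A" "j \<notin> A" "k \<notin> A" "j \<noteq> k"
  shows "(\<Sum>y\<in>Pow (insert j (insert k A)). F y) = (\<Sum>a\<in>UNIV. \<Sum>b\<in>UNIV. \<Sum>y\<in>Pow A. F (y \<union> pair_bits j k a b))"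
proof -
  have "(\<Sum>y\<in>Pow (insert j (insert k A)). F y) = (\<Sum>y\<in>Pow (insert k A). F y + F (insert j y))"
    using assms by (intro sum_Pow_insert) auto
  also have "\<dots> = (\<Sum>y\<in>Pow A. (F y + F (insert j y)) + (F (insert k y) + F (insert j (insert k y))))"
    using assms by (intro sum_Pow_insert) auto
  also have "\<dots> = (\<Sum>a\<in>UNIV. \<Sum>b\<in>UNIV. \<Sum>y\<in>Pow A. F (y \<union> pair_bits j k a b))"
    by (simp add: UNIV_bool pair_bits_def sum.distrib insert_commute add_ac)
  finally show ?thesis .
qed

lemma prod_four_regions:
  fixes F :: "'a \<Rightarrow> 'b::comm_monoid_mult"
  assumes fA: "finite A" and P: "P \<subseteq> A" and Q: "Q \<subseteq> A"
    and F: "\<And>u. F u = (if u \<in> P then (if u \<in> Q then c1 else c2) else (if u \<in> Q then c3 else c4))"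
  shows "(\<Prod>u\<in>A. F u) = c1 ^ card (P \<inter> Q) * c2 ^ card (P - Q) * c3 ^ card (Q - P) * c4 ^ card (A - (P \<union> Q))"
proof -
  have fP: "finite (A \<inter> P)" "finite (A - P)" using fA by auto
  have "(\<Prod>u\<in>A. F u) = (\<Prod>u\<in>A \<inter> P. F u) * (\<Prod>u\<in>A - P. F u)"
    by (rule prod.Int_Diff[OF fA])
  also have "(\<Prod>u\<in>A \<inter> P. F u) = (\<Prod>u\<in>A \<inter> P \<inter> Q. F u) * (\<Prod>u\<in>A \<inter> P - Q. F u)"
    by (rule prod.Int_Diff[OF fP(1)])
  also have "(\<Prod>u\<in>A - P. F u) = (\<Prod>u\<in>(A - P) \<inter> Q. F u) * (\<Prod>u\<in>(A - P) - Q. F u)"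
    by (rule prod.Int_Diff[OF fP(2)])
  also have "A \<inter> P \<inter> Q = P \<inter> Q" using P by auto
  also have "A \<inter> P - Q = P - Q" using P by auto
  also have "(A - P) \<inter> Q = Q - P" using Q by auto
  also have "(A - P) - Q = A - (P \<union> Q)" by auto
  also have "(\<Prod>u\<in>P \<inter> Q. F u) = (\<Prod>u\<in>P \<inter> Q. c1)" by (rule prod.cong) (auto simp: F)
  also have "(\<Prod>u\<in>P - Q. F u) = (\<Prod>u\<in>P - Q. c2)" by (rule prod.cong) (auto simp: F)
  also have "(\<Prod>u\<in>Q - P. F u) = (\<Prod>u\<in>Q - P. c3)" by (rule prod.cong) (auto simp: F)
  also have "(\<Prod>u\<in>A - (P \<union> Q). F u) = (\<Prod>u\<in>A - (P \<union> Q). c4)" by (rule prod.cong) (auto simp: F)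
  finally show ?thesis by (simp only: prod_constant mult_ac)
qed

lemma prod_subset_eq_prod_if:
  fixes f :: "'a \<Rightarrow> 'b::comm_monoid_mult"
  assumes "finite A" "S \<subseteq> A"
  shows "prod f S = (\<Prod>l\<in>A. if l \<in> S then f l else 1)"
  using assms by (simp add: prod.If_cases Int_absorb1 Int_commute)

lemma sum_Pow_prod_prod:
  fixes f g :: "bool \<Rightarrow> 'b::comm_semiring_1"
  assumes fA: "finite A" and P: "P \<subseteq> A" and Q: "Q \<subseteq> A"
  shows "(\<Sum>Y\<in>Pow A. (\<Prod>u\<in>P. f (u\<in>Y)) * (\<Prod>u\<in>Q. g (u\<in>Y)))
    = (f True * g True + f False * g False) ^ card (P \<inter> Q) * (f True + f False) ^ card (P - Q)
      * (g True + g False) ^ card (Q - P) * 2 ^ card (A - (P \<union> Q))"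
proof -
  define h where "h u p = (if u \<in> P then f p else 1) * (if u \<in> Q then g p else 1)" for u p
  have "(\<Sum>Y\<in>Pow A. (\<Prod>u\<in>P. f (u\<in>Y)) * (\<Prod>u\<in>Q. g (u\<in>Y))) = (\<Sum>Y\<in>Pow A. \<Prod>u\<in>A. h u (u \<in> Y))"
    unfolding prod_subset_eq_prod_if[OF fA P] prod_subset_eq_prod_if[OF fA Q] h_def prod.distrib ..
  also have "\<dots> = (\<Prod>u\<in>A. h u True + h u False)" by (rule sum_Pow_prod[OF fA])
  also have "\<dots> = (f True * g True + f False * g False) ^ card (P \<inter> Q) * (f True + f False) ^ card (P - Q)
      * (g True + g False) ^ card (Q - P) * 2 ^ card (A - (P \<union> Q))"
    by (rule prod_four_regions[OF fA P Q]) (simp add: h_def)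
  finally show ?thesis .
qed

section \<open>The cost layer\<close>

definition spin :: "bool \<Rightarrow> real" where
  "spin b = (if b then -1 else 1)"

lemma spin_mult_self [simp]: "spin b * spin b = 1"
  by (simp add: spin_def)

lemma finite_basis [simp]: "finite (basis n)"
  by (simp add: basis_def)

lemma mpow_diag:
  assumes D: "\<And>x y. x \<in> basis n \<Longrightarrow> y \<in> basis n \<Longrightarrow> D x y = (if x = y then d x else 0)"
    and "x \<in> basis n" "y \<in> basis n"
  shows "mpow n D k x y = (if x = y then d x ^ k else 0)"
  using assms(2,3)
proof (induction k arbitrary: x)
  case 0
  then show ?case by (simp add: mid_def)
next
  case (Suc k)
  have "mpow n D (Suc k) x y = (\<Sum>z\<in>basis n. if z = x then d x * (if x = y then d x ^ k else 0) else 0)"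
    unfolding mpow.simps mmult_def by (rule sum.cong) (use Suc D in auto)
  then show ?case using Suc by simp
qed

lemma exp_sums: "(\<lambda>k. c ^ k / of_nat (fact k)) sums exp (c::complex)"
  using exp_converges[of c] by (simp add: scaleR_conv_of_real divide_inverse mult.commute)

lemma mexp_diag:
  assumes D: "\<And>x y. x \<in> basis n \<Longrightarrow> y \<in> basis n \<Longrightarrow> D x y = (if x = y then d x else 0)"
    and "x \<in> basis n" "y \<in> basis n"
  shows "mexp n D x y = (if x = y then exp (d x) else 0)"
  using sums_unique[OF exp_sums[of "d x"]] mpow_diag[OF assms]
  by (auto simp: mexp_def)

definition cut_value :: "(nat \<Rightarrow> nat \<Rightarrow> bool) \<Rightarrow> nat set \<Rightarrow> real" where
  "cut_value adj x = (\<Sum>e\<in>edges adj. (1 - spin (fst e \<in> x) * spin (snd e \<in> x)) / 2)"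

lemma pauliZ_mult_entry:
  assumes "x \<in> basis n"
  shows "mmult n (pauliZ j) (pauliZ k) x y = (if x = y then of_real (spin (j \<in> x) * spin (k \<in> x)) else 0)"
proof -
  have "mmult n (pauliZ j) (pauliZ k) x y = (\<Sum>z\<in>basis n. if z = x then pauliZ j x x * pauliZ k x y else 0)"
    unfolding mmult_def by (rule sum.cong) (auto simp: pauliZ_def)
  then show ?thesis using assms by (simp add: pauliZ_def spin_def)
qed

lemma cost_op_entry:
  assumes "x \<in> basis n"
  shows "cost_op n adj x y = (if x = y then of_real (cut_value adj x) else 0)"
proof -
  have "cost_op n adj x y = (\<Sum>e\<in>edges adj. (1/2) * (mid x y - mmult n (pauliZ (fst e)) (pauliZ (snd e)) x y))"
    unfolding cost_op_def msum_def by (rule sum.cong) (auto simp: mscale_def madd_def)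
  then show ?thesis
    by (auto simp: pauliZ_mult_entry[OF assms] mid_def cut_value_def of_real_sum diff_divide_distrib)
qed

lemma cost_op_apply:
  assumes "x \<in> basis n"
  shows "mapply n (cost_op n adj) v x = of_real (cut_value adj x) * v x"
proof -
  have "mapply n (cost_op n adj) v x = (\<Sum>y\<in>basis n. if y = x then of_real (cut_value adj x) * v x else 0)"
    unfolding mapply_def by (rule sum.cong) (auto simp: cost_op_entry[OF assms])
  then show ?thesis using assms by simp
qed

definition cost_layer_state :: "nat \<Rightarrow> (nat \<Rightarrow> nat \<Rightarrow> bool) \<Rightarrow> real \<Rightarrow> nat set \<Rightarrow> complex" where
  "cost_layer_state n adj \<gamma> y = of_real (1 / sqrt (2 ^ n)) * exp (- (\<i> * of_real \<gamma>) * of_real (cut_value adj y))"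

lemma U_cost_op_plus_state:
  assumes "y \<in> basis n"
  shows "mapply n (U_op n (cost_op n adj) \<gamma>) (plus_state n) y = cost_layer_state n adj \<gamma> y"
proof -
  have D: "mscale (- (\<i> * of_real \<gamma>)) (cost_op n adj) x z
      = (if x = z then - (\<i> * of_real \<gamma>) * of_real (cut_value adj x) else 0)" if "x \<in> basis n" for x z
    using cost_op_entry[OF that] by (simp add: mscale_def)
  have "mapply n (U_op n (cost_op n adj) \<gamma>) (plus_state n) y
      = (\<Sum>z\<in>basis n. if z = y then exp (- (\<i> * of_real \<gamma>) * of_real (cut_value adj y)) * plus_state n z else 0)"
    unfolding mapply_def U_op_def by (rule sum.cong) (use mexp_diag[OF D assms] in auto)
  then show ?thesis
    using assms by (simp add: plus_state_def cost_layer_state_def)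
qed

section \<open>The mixing layer\<close>

definition flip :: "nat \<Rightarrow> nat set \<Rightarrow> nat set" where
  "flip j x = (if j \<in> x then x - {j} else insert j x)"

lemma flip_eq_iff: "x = flip j z \<longleftrightarrow> z = flip j x"
  unfolding flip_def by auto

lemma flip_basis: "x \<in> basis n \<Longrightarrow> j < n \<Longrightarrow> flip j x \<in> basis n"
  unfolding flip_def basis_def by auto

lemma mixer_op_sum:
  assumes "x \<in> basis n"
  shows "(\<Sum>z\<in>basis n. mixer_op n x z * f z) = (\<Sum>j<n. f (flip j x))"
proof -
  have X: "pauliX j x z = (if z = flip j x then 1 else 0)" for j z
    unfolding pauliX_def using flip_eq_iff[of x j z] by (simp add: flip_def)
  have "(\<Sum>z\<in>basis n. mixer_op n x z * f z) = (\<Sum>z\<in>basis n. \<Sum>j<n. if z = flip j x then f z else 0)"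
    unfolding mixer_op_def msum_def sum_distrib_right by (intro sum.cong refl) (simp add: X)
  also have "\<dots> = (\<Sum>j<n. \<Sum>z\<in>basis n. if z = flip j x then f z else 0)"
    by (rule sum.swap)
  also have "\<dots> = (\<Sum>j<n. f (flip j x))"
    using flip_basis[OF assms] by (intro sum.cong refl) simp
  finally show ?thesis .
qed

definition walsh :: "nat set \<Rightarrow> nat set \<Rightarrow> complex" where
  "walsh S x = (\<Prod>l\<in>S. of_real (spin (l \<in> x)))"

definition mixer_eigenvalue :: "nat \<Rightarrow> nat set \<Rightarrow> complex" where
  "mixer_eigenvalue n S = (\<Sum>j<n. if j \<in> S then -1 else 1)"

lemma walsh_flip:
  assumes "finite S"
  shows "walsh S (flip j x) = (if j \<in> S then -1 else 1) * walsh S x"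
proof (cases "j \<in> S")
  case True
  have "(\<Prod>l\<in>S - {j}. of_real (spin (l \<in> flip j x))) = (\<Prod>l\<in>S - {j}. complex_of_real (spin (l \<in> x)))"
    by (rule prod.cong) (auto simp: flip_def)
  moreover have "spin (j \<in> flip j x) = - spin (j \<in> x)"
    by (simp add: flip_def spin_def)
  ultimately show ?thesis
    using True unfolding walsh_def prod.remove[OF assms True] by simp
next
  case False
  then show ?thesis
    unfolding walsh_def by (auto simp: flip_def intro!: prod.cong arg_cong[where f = spin])
qed

lemma mixer_op_walsh:
  assumes "x \<in> basis n" "S \<in> basis n"
  shows "(\<Sum>z\<in>basis n. mixer_op n x z * walsh S z) = mixer_eigenvalue n S * walsh S x"
proof -
  have "finite S" using assms(2) unfolding basis_def by (auto intro: finite_subset)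
  then show ?thesis
    unfolding mixer_op_sum[OF assms(1)] walsh_flip[OF \<open>finite S\<close>] mixer_eigenvalue_def sum_distrib_right
    by simp
qed

lemma walsh_mult:
  assumes "S \<in> basis n"
  shows "walsh S x * walsh S y = (\<Prod>l<n. if l \<in> S then of_real (spin (l \<in> x) * spin (l \<in> y)) else 1)"
proof -
  have "walsh S x * walsh S y = (\<Prod>l\<in>S. of_real (spin (l \<in> x) * spin (l \<in> y)))"
    unfolding walsh_def by (simp add: prod.distrib[symmetric])
  also have "\<dots> = (\<Prod>l<n. if l \<in> S then of_real (spin (l \<in> x) * spin (l \<in> y)) else 1)"
    by (rule prod_subset_eq_prod_if) (use assms in \<open>auto simp: basis_def\<close>)
  finally show ?thesis .
qed

lemma walsh_orthogonal:
  assumes "x \<in> basis n" "y \<in> basis n"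
  shows "(\<Sum>S\<in>basis n. walsh S x * walsh S y) = (if x = y then 2 ^ n else 0)"
proof -
  have "(\<Sum>S\<in>basis n. walsh S x * walsh S y)
      = (\<Sum>S\<in>Pow {..<n}. \<Prod>l<n. if l \<in> S then of_real (spin (l \<in> x) * spin (l \<in> y)) else 1)"
    unfolding basis_def by (rule sum.cong) (simp_all add: walsh_mult[unfolded basis_def])
  also have "\<dots> = (\<Prod>l<n. of_real (spin (l \<in> x) * spin (l \<in> y)) + 1)"
    using sum_Pow_prod[of "{..<n}" "\<lambda>l b. if b then of_real (spin (l \<in> x) * spin (l \<in> y)) else 1"]
    by simp
  also have "\<dots> = (if x = y then 2 ^ n else 0)"
  proof (cases "x = y")
    case False
    then obtain l where l: "l \<in> x \<longleftrightarrow> l \<notin> y" by blast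
    then have "l < n" using assms unfolding basis_def by auto
    moreover have "complex_of_real (spin (l \<in> x) * spin (l \<in> y)) + 1 = 0"
      using l by (auto simp: spin_def)
    ultimately show ?thesis using False by (auto intro: prod_zero)
  qed simp
  finally show ?thesis .
qed

lemma mpow_mixer_op:
  assumes "x \<in> basis n" "y \<in> basis n"
  shows "mpow n (mixer_op n) k x y = (1 / 2 ^ n) * (\<Sum>S\<in>basis n. walsh S x * walsh S y * mixer_eigenvalue n S ^ k)"
  using assms(1)
proof (induction k arbitrary: x)
  case 0
  then show ?case using walsh_orthogonal[OF _ assms(2)] by (simp add: mid_def)
next
  case (Suc k)
  have "mpow n (mixer_op n) (Suc k) x y
      = (1 / 2 ^ n) * (\<Sum>z\<in>basis n. \<Sum>S\<in>basis n. mixer_op n x z * walsh S z * (walsh S y * mixer_eigenvalue n S ^ k))"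
    using Suc.IH by (simp add: mmult_def sum_distrib_left mult_ac)
  also have "\<dots> = (1 / 2 ^ n) * (\<Sum>S\<in>basis n. (\<Sum>z\<in>basis n. mixer_op n x z * walsh S z) * (walsh S y * mixer_eigenvalue n S ^ k))"
    by (subst sum.swap) (simp add: sum_distrib_right)
  also have "\<dots> = (1 / 2 ^ n) * (\<Sum>S\<in>basis n. walsh S x * walsh S y * mixer_eigenvalue n S ^ Suc k)"
  proof (intro arg_cong[where f = "\<lambda>t. (1 / 2 ^ n) * t"] sum.cong refl)
    fix S assume S: "S \<in> basis n"
    show "(\<Sum>z\<in>basis n. mixer_op n x z * walsh S z) * (walsh S y * mixer_eigenvalue n S ^ k)
        = walsh S x * walsh S y * mixer_eigenvalue n S ^ Suc k"
      using mixer_op_walsh[OF Suc.prems S] by (simp add: mult_ac)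
  qed
  finally show ?case .
qed

lemma mexp_mixer_op:
  assumes "x \<in> basis n" "y \<in> basis n"
  shows "mexp n (mscale c (mixer_op n)) x y
    = (1 / 2 ^ n) * (\<Sum>S\<in>basis n. walsh S x * walsh S y * exp (c * mixer_eigenvalue n S))"
proof -
  have "mpow n (mscale c A) k x y = c ^ k * mpow n A k x y" for A k x y
    by (induction k arbitrary: x y) (simp_all add: mid_def mmult_def mscale_def sum_distrib_left mult_ac)
  then have "(\<lambda>k. mpow n (mscale c (mixer_op n)) k x y / of_nat (fact k))
      = (\<lambda>k. \<Sum>S\<in>basis n. (1 / 2 ^ n * walsh S x * walsh S y) * ((c * mixer_eigenvalue n S) ^ k / of_nat (fact k)))"
    by (simp add: mpow_mixer_op[OF assms] sum_distrib_left sum_divide_distrib power_mult_distrib mult_ac)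
  moreover have "(\<lambda>k. \<Sum>S\<in>basis n. (1 / 2 ^ n * walsh S x * walsh S y) * ((c * mixer_eigenvalue n S) ^ k / of_nat (fact k)))
      sums (\<Sum>S\<in>basis n. (1 / 2 ^ n * walsh S x * walsh S y) * exp (c * mixer_eigenvalue n S))"
    by (intro sums_sum sums_mult exp_sums)
  ultimately show ?thesis
    unfolding mexp_def by (simp add: sums_unique[symmetric] sum_distrib_left mult_ac)
qed

text \<open>Entries of the single-qubit rotation e^{-i\<beta>X}.\<close>

definition rx_entry :: "real \<Rightarrow> bool \<Rightarrow> bool \<Rightarrow> complex" where
  "rx_entry \<beta> p q = (if p = q then of_real (cos \<beta>) else - (\<i> * of_real (sin \<beta>)))"

lemma rx_entry_exp:
  "rx_entry \<beta> p q = (of_real (spin p * spin q) * exp (\<i> * of_real \<beta>) + exp (- (\<i> * of_real \<beta>))) / 2"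
proof -
  have "exp (\<i> * of_real \<beta>) = Complex (cos \<beta>) (sin \<beta>)"
    using cis_conv_exp[of \<beta>] by (simp add: cis.ctr)
  moreover have "exp (- (\<i> * of_real \<beta>)) = Complex (cos \<beta>) (- sin \<beta>)"
    using cis_conv_exp[of "- \<beta>"] by (simp add: cis.ctr)
  ultimately show ?thesis
    unfolding rx_entry_def by (cases p; cases q) (simp_all add: spin_def complex_eq_iff)
qed

lemma U_mixer_op_entry:
  assumes "x \<in> basis n" "y \<in> basis n"
  shows "U_op n (mixer_op n) \<beta> x y = (\<Prod>l<n. rx_entry \<beta> (l \<in> x) (l \<in> y))"
proof -
  define c where "c = - (\<i> * complex_of_real \<beta>)"
  have "walsh S x * walsh S y * exp (c * mixer_eigenvalue n S)
      = (\<Prod>l<n. if l \<in> S then of_real (spin (l \<in> x) * spin (l \<in> y)) * exp (- c) else exp c)"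
    if "S \<in> basis n" for S
  proof -
    have "exp (c * mixer_eigenvalue n S) = (\<Prod>l<n. if l \<in> S then exp (- c) else exp c)"
      unfolding mixer_eigenvalue_def sum_distrib_left exp_sum[OF finite_lessThan]
      by (rule prod.cong) auto
    then show ?thesis
      unfolding walsh_mult[OF that] by (auto simp: prod.distrib[symmetric] intro!: prod.cong)
  qed
  then have "U_op n (mixer_op n) \<beta> x y
      = (1 / 2 ^ n) * (\<Sum>S\<in>Pow {..<n}. \<Prod>l<n. if l \<in> S then of_real (spin (l \<in> x) * spin (l \<in> y)) * exp (- c) else exp c)"
    unfolding U_op_def c_def[symmetric] mexp_mixer_op[OF assms] by (simp add: basis_def)
  also have "\<dots> = (1 / 2 ^ n) * (\<Prod>l<n. of_real (spin (l \<in> x) * spin (l \<in> y)) * exp (- c) + exp c)"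
    using sum_Pow_prod[of "{..<n}" "\<lambda>l b. if b then of_real (spin (l \<in> x) * spin (l \<in> y)) * exp (- c) else exp c"]
    by simp
  also have "\<dots> = (\<Prod>l<n. rx_entry \<beta> (l \<in> x) (l \<in> y))"
    unfolding rx_entry_exp c_def by (simp add: prod_dividef)
  finally show ?thesis .
qed

lemma qaoa_state_expand:
  assumes "x \<in> basis n"
  shows "qaoa_state n adj \<gamma> \<beta> x = (\<Sum>y\<in>basis n. (\<Prod>l<n. rx_entry \<beta> (l \<in> x) (l \<in> y)) * cost_layer_state n adj \<gamma> y)"
  unfolding qaoa_state_def mapply_def[of n "U_op n (mixer_op n) \<beta>"]
  by (rule sum.cong) (simp_all add: U_mixer_op_entry[OF assms] U_cost_op_plus_state)

section \<open>Expectations of diagonal observables\<close>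

definition rx_kernel :: "(bool \<Rightarrow> complex) \<Rightarrow> real \<Rightarrow> bool \<Rightarrow> bool \<Rightarrow> complex" where
  "rx_kernel \<omega> \<beta> a b = (\<Sum>p\<in>UNIV. \<omega> p * (cnj (rx_entry \<beta> p a) * rx_entry \<beta> p b))"

lemma rx_kernel_const_one: "rx_kernel (\<lambda>_. 1) \<beta> a b = (if a = b then 1 else 0)"
  unfolding rx_kernel_def rx_entry_def
  by (cases a; cases b) (simp_all add: UNIV_bool complex_eq_iff sin_cos_squared_add3)

lemma sum_basis_prod_rx_entry:
  "(\<Sum>x\<in>basis n. (\<Prod>l<n. \<omega> l (l \<in> x)) * cnj (\<Prod>l<n. rx_entry \<beta> (l \<in> x) (l \<in> y)) * (\<Prod>l<n. rx_entry \<beta> (l \<in> x) (l \<in> y')))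
    = (\<Prod>l<n. rx_kernel (\<omega> l) \<beta> (l \<in> y) (l \<in> y'))"
proof -
  have "(\<Sum>x\<in>basis n. (\<Prod>l<n. \<omega> l (l \<in> x)) * cnj (\<Prod>l<n. rx_entry \<beta> (l \<in> x) (l \<in> y)) * (\<Prod>l<n. rx_entry \<beta> (l \<in> x) (l \<in> y')))
      = (\<Sum>x\<in>Pow {..<n}. \<Prod>l<n. (\<lambda>l p. \<omega> l p * (cnj (rx_entry \<beta> p (l \<in> y)) * rx_entry \<beta> p (l \<in> y'))) l (l \<in> x))"
    unfolding basis_def cnj_prod prod.distrib[symmetric] by (simp add: mult_ac)
  also have "\<dots> = (\<Prod>l<n. rx_kernel (\<omega> l) \<beta> (l \<in> y) (l \<in> y'))"
    by (subst sum_Pow_prod) (simp_all add: rx_kernel_def UNIV_bool add.commute)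
  finally show ?thesis .
qed

lemma weighted_expectation_expand:
  "(\<Sum>x\<in>basis n. (\<Prod>l<n. \<omega> l (l \<in> x)) * (cnj (qaoa_state n adj \<gamma> \<beta> x) * qaoa_state n adj \<gamma> \<beta> x))
   = (\<Sum>y\<in>basis n. \<Sum>y'\<in>basis n. cnj (cost_layer_state n adj \<gamma> y) * cost_layer_state n adj \<gamma> y'
        * (\<Prod>l<n. rx_kernel (\<omega> l) \<beta> (l \<in> y) (l \<in> y')))"
proof -
  define U where "U x y = (\<Prod>l<n. rx_entry \<beta> (l \<in> x) (l \<in> y))" for x y
  define w where "w x = (\<Prod>l<n. \<omega> l (l \<in> x))" for x
  define \<phi> where "\<phi> = cost_layer_state n adj \<gamma>"
  have "(\<Sum>x\<in>basis n. w x * (cnj (qaoa_state n adj \<gamma> \<beta> x) * qaoa_state n adj \<gamma> \<beta> x))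
      = (\<Sum>x\<in>basis n. \<Sum>y\<in>basis n. \<Sum>y'\<in>basis n. w x * cnj (U x y) * U x y' * (cnj (\<phi> y) * \<phi> y'))"
  proof (rule sum.cong)
    fix x assume x: "x \<in> basis n"
    have "cnj (qaoa_state n adj \<gamma> \<beta> x) * qaoa_state n adj \<gamma> \<beta> x
        = (\<Sum>y\<in>basis n. \<Sum>y'\<in>basis n. cnj (U x y * \<phi> y) * (U x y' * \<phi> y'))"
      unfolding qaoa_state_expand[OF x] U_def[symmetric] \<phi>_def[symmetric] cnj_sum sum_product ..
    then show "w x * (cnj (qaoa_state n adj \<gamma> \<beta> x) * qaoa_state n adj \<gamma> \<beta> x)
      = (\<Sum>y\<in>basis n. \<Sum>y'\<in>basis n. w x * cnj (U x y) * U x y' * (cnj (\<phi> y) * \<phi> y'))"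
      by (simp add: sum_distrib_left mult_ac)
  qed simp
  also have "\<dots> = (\<Sum>y\<in>basis n. \<Sum>y'\<in>basis n. \<Sum>x\<in>basis n. w x * cnj (U x y) * U x y' * (cnj (\<phi> y) * \<phi> y'))"
    by (subst sum.swap) (rule sum.cong[OF refl], rule sum.swap)
  also have "\<dots> = (\<Sum>y\<in>basis n. \<Sum>y'\<in>basis n. cnj (\<phi> y) * \<phi> y' * (\<Prod>l<n. rx_kernel (\<omega> l) \<beta> (l \<in> y) (l \<in> y')))"
  proof (intro sum.cong refl)
    fix y y'
    have "(\<Sum>x\<in>basis n. w x * cnj (U x y) * U x y') = (\<Prod>l<n. rx_kernel (\<omega> l) \<beta> (l \<in> y) (l \<in> y'))"
      unfolding w_def U_def by (rule sum_basis_prod_rx_entry)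
    then show "(\<Sum>x\<in>basis n. w x * cnj (U x y) * U x y' * (cnj (\<phi> y) * \<phi> y'))
        = cnj (\<phi> y) * \<phi> y' * (\<Prod>l<n. rx_kernel (\<omega> l) \<beta> (l \<in> y) (l \<in> y'))"
      unfolding sum_distrib_right[symmetric] by (simp only: mult.commute)
  qed
  finally show ?thesis unfolding w_def \<phi>_def .
qed

lemma prod_lessThan_pair:
  fixes n :: nat
  assumes "j < n" "k < n" "j \<noteq> k"
  shows "(\<Prod>l<n. f l) = f j * f k * (\<Prod>l\<in>{..<n} - {j, k}. f l)"
proof -
  define A where "A = {..<n} - {j, k}"
  have split: "{..<n} = insert j (insert k A)" and "finite A" "j \<notin> A" "k \<notin> A"
    using assms unfolding A_def by auto
  then have "(\<Prod>l<n. f l) = f j * f k * (\<Prod>l\<in>A. f l)"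
    unfolding split using assms(3) by (simp add: mult.assoc)
  then show ?thesis unfolding A_def .
qed

definition pair_weight :: "nat \<Rightarrow> nat \<Rightarrow> (bool \<Rightarrow> complex) \<Rightarrow> (bool \<Rightarrow> complex) \<Rightarrow> nat \<Rightarrow> bool \<Rightarrow> complex" where
  "pair_weight j k \<omega>j \<omega>k l = (if l = j then \<omega>j else if l = k then \<omega>k else (\<lambda>_. 1))"

lemma prod_rx_kernel_pair_weight:
  assumes "j < n" "k < n" "j \<noteq> k"
  defines "A \<equiv> {..<n} - {j, k}"
  shows "(\<Prod>l<n. rx_kernel (pair_weight j k \<omega>j \<omega>k l) \<beta> (l \<in> y) (l \<in> y'))
    = rx_kernel \<omega>j \<beta> (j \<in> y) (j \<in> y') * rx_kernel \<omega>k \<beta> (k \<in> y) (k \<in> y')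
      * (if y' \<inter> A = y \<inter> A then 1 else 0)"
proof -
  define f where "f l = rx_kernel (pair_weight j k \<omega>j \<omega>k l) \<beta> (l \<in> y) (l \<in> y')" for l
  have "(\<Prod>l<n. f l) = f j * f k * (\<Prod>l\<in>A. f l)"
    unfolding A_def by (rule prod_lessThan_pair[OF assms(1-3)])
  also have "(\<Prod>l\<in>A. f l) = (\<Prod>l\<in>A. if (l \<in> y) = (l \<in> y') then 1 else 0)"
    by (rule prod.cong) (auto simp: A_def f_def pair_weight_def rx_kernel_const_one)
  also have "\<dots> = (if y' \<inter> A = y \<inter> A then 1 else 0)"
  proof (cases "y' \<inter> A = y \<inter> A")
    case False
    then obtain l where "l \<in> A" "(l \<in> y) \<noteq> (l \<in> y')" by blast
    then show ?thesis using False by (auto simp: A_def intro!: prod_zero)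
  qed (auto intro!: prod.neutral)
  finally show ?thesis
    using assms(3) by (simp add: f_def pair_weight_def mult_ac)
qed

lemma light_cone_reduction:
  fixes \<phi> :: "nat set \<Rightarrow> complex"
  assumes "j < n" "k < n" "j \<noteq> k"
  defines "A \<equiv> {..<n} - {j, k}"
  shows "(\<Sum>y\<in>basis n. \<Sum>y'\<in>basis n. cnj (\<phi> y) * \<phi> y' *
      (\<Prod>l<n. rx_kernel (pair_weight j k \<omega>j \<omega>k l) \<beta> (l \<in> y) (l \<in> y')))
   = (\<Sum>a\<in>UNIV. \<Sum>b\<in>UNIV. \<Sum>a'\<in>UNIV. \<Sum>b'\<in>UNIV. rx_kernel \<omega>j \<beta> a a' * rx_kernel \<omega>k \<beta> b b' *
        (\<Sum>Y\<in>Pow A. cnj (\<phi> (Y \<union> pair_bits j k a b)) * \<phi> (Y \<union> pair_bits j k a' b')))"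
proof -
  have fA: "finite A" and jA: "j \<notin> A" and kA: "k \<notin> A" unfolding A_def by auto
  have bn: "basis n = Pow (insert j (insert k A))" using assms unfolding A_def basis_def by auto
  define G where "G a b a' b' = rx_kernel \<omega>j \<beta> a a' * rx_kernel \<omega>k \<beta> b b'" for a b a' b'
  define \<Phi> where "\<Phi> Y a b Y' a' b' = cnj (\<phi> (Y \<union> pair_bits j k a b)) * \<phi> (Y' \<union> pair_bits j k a' b')"
    for Y a b Y' a' b'
  have "(\<Sum>y\<in>basis n. \<Sum>y'\<in>basis n. cnj (\<phi> y) * \<phi> y' *
      (\<Prod>l<n. rx_kernel (pair_weight j k \<omega>j \<omega>k l) \<beta> (l \<in> y) (l \<in> y')))
    = (\<Sum>a\<in>UNIV. \<Sum>b\<in>UNIV. \<Sum>Y\<in>Pow A. \<Sum>a'\<in>UNIV. \<Sum>b'\<in>UNIV. \<Sum>Y'\<in>Pow A.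
        if Y' = Y then G a b a' b' * \<Phi> Y a b Y' a' b' else 0)"
    unfolding bn sum_Pow_insert_pair[OF fA jA kA assms(3)]
  proof (intro sum.cong refl)
    fix a b a' b' Y Y' assume "Y \<in> Pow A" "Y' \<in> Pow A"
    then have Y: "Y \<subseteq> A" and Y': "Y' \<subseteq> A" by auto
    show "cnj (\<phi> (Y \<union> pair_bits j k a b)) * \<phi> (Y' \<union> pair_bits j k a' b') *
        (\<Prod>l<n. rx_kernel (pair_weight j k \<omega>j \<omega>k l) \<beta> (l \<in> Y \<union> pair_bits j k a b) (l \<in> Y' \<union> pair_bits j k a' b'))
      = (if Y' = Y then G a b a' b' * \<Phi> Y a b Y' a' b' else 0)"
      unfolding prod_rx_kernel_pair_weight[OF assms(1-3), folded A_def]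
        pair_bits_mem(1,2,4)[OF Y jA kA assms(3)] pair_bits_mem(1,2,4)[OF Y' jA kA assms(3)]
      by (simp add: G_def \<Phi>_def)
  qed
  also have "\<dots> = (\<Sum>a\<in>UNIV. \<Sum>b\<in>UNIV. \<Sum>Y\<in>Pow A. \<Sum>a'\<in>UNIV. \<Sum>b'\<in>UNIV. G a b a' b' * \<Phi> Y a b Y a' b')"
    using fA by (intro sum.cong refl) (simp add: sum.delta)
  also have "\<dots> = (\<Sum>a\<in>UNIV. \<Sum>b\<in>UNIV. \<Sum>a'\<in>UNIV. \<Sum>b'\<in>UNIV. \<Sum>Y\<in>Pow A. G a b a' b' * \<Phi> Y a b Y a' b')"
    by (intro sum.cong refl) (subst sum.swap, rule sum.cong[OF refl], rule sum.swap)
  finally show ?thesis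
    by (simp add: G_def \<Phi>_def sum_distrib_left)
qed

lemma simple_graph_adjD:
  assumes "simple_graph n adj" "adj p q"
  shows "adj q p" "p \<noteq> q" "p < n" "q < n"
  using assms unfolding simple_graph_def by blast+

lemma finite_edges: "simple_graph n adj \<Longrightarrow> finite (edges adj)"
  unfolding simple_graph_def edges_def
  by (rule finite_subset[of _ "{..<n} \<times> {..<n}"]) auto

lemma finite_neighbours: "simple_graph n adj \<Longrightarrow> finite {u. adj p u}"
  by (rule finite_subset[of _ "{..<n}"]) (auto dest: simple_graph_adjD)

lemma min_max_in_edges:
  assumes "simple_graph n adj" "adj p q"
  shows "(min p q, max p q) \<in> edges adj"
  using simple_graph_adjD[OF assms] assms(2) unfolding edges_def
  by (cases "p < q") (auto simp: min_def max_def)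

lemma edges_incident_pair:
  assumes sg: "simple_graph n adj" and jk: "(j, k) \<in> edges adj"
  shows "{e \<in> edges adj. fst e \<in> {j, k} \<or> snd e \<in> {j, k}} =
    insert (j, k) ((\<lambda>u. (min j u, max j u)) ` ({u. adj j u} - {k}) \<union> (\<lambda>u. (min k u, max k u)) ` ({u. adj k u} - {j}))"
    (is "?L = ?R")
proof
  show "?R \<subseteq> ?L" using jk min_max_in_edges[OF sg] by (auto simp: min_def max_def)
  show "?L \<subseteq> ?R"
  proof
    fix e assume "e \<in> ?L"
    then obtain p q where e: "e = (p, q)" "p < q" "adj p q" "p \<in> {j, k} \<or> q \<in> {j, k}"
      by (auto simp: edges_def)
    have "j < k" using jk by (simp add: edges_def)
    then consider "p = j" "q = k" | "p = j" "q \<in> {u. adj j u} - {k}" | "p = k" "q \<in> {u. adj k u} - {j}"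
      | "q = j" "p \<in> {u. adj j u} - {k}" | "q = k" "p \<in> {u. adj k u} - {j}"
      using e simple_graph_adjD[OF sg e(3)] by auto
    then show "e \<in> ?R"
    proof cases
      case 1
      then show ?thesis using e by simp
    next
      case 2
      then show ?thesis using e by (auto simp: image_iff min_def max_def)
    next
      case 3
      then show ?thesis using e by (auto simp: image_iff min_def max_def)
    next
      case 4
      then show ?thesis using e by (auto simp: image_iff min_def max_def intro!: bexI[of _ p])
    next
      case 5
      then show ?thesis using e by (auto simp: image_iff min_def max_def intro!: bexI[of _ p])
    qed
  qed
qed

lemma prod_edges_incident_pair:
  fixes h :: "nat \<Rightarrow> nat \<Rightarrow> 'a::comm_monoid_mult"
  assumes sg: "simple_graph n adj" and jk: "(j, k) \<in> edges adj"
    and h_sym: "\<And>p q. h p q = h q p"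
    and h_far: "\<And>p q. p \<notin> {j, k} \<Longrightarrow> q \<notin> {j, k} \<Longrightarrow> h p q = 1"
  shows "(\<Prod>e\<in>edges adj. h (fst e) (snd e))
       = h j k * (\<Prod>u\<in>{u. adj j u} - {k}. h j u) * (\<Prod>u\<in>{u. adj k u} - {j}. h k u)"
proof -
  have "j < k" using jk by (simp add: edges_def)
  have irr: "\<not> adj p p" for p using simple_graph_adjD(2)[OF sg] by blast
  define mj where "mj u = (min j u, max j u)" for u
  define mk where "mk u = (min k u, max k u)" for u
  define Nj where "Nj = {u. adj j u} - {k}"
  define Nk where "Nk = {u. adj k u} - {j}"
  have fin: "finite Nj" "finite Nk"
    unfolding Nj_def Nk_def using finite_neighbours[OF sg] by auto
  have "(\<Prod>e\<in>edges adj. h (fst e) (snd e)) = (\<Prod>e\<in>{e \<in> edges adj. fst e \<in> {j, k} \<or> snd e \<in> {j, k}}. h (fst e) (snd e))"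
    using h_far by (intro prod.mono_neutral_right finite_edges[OF sg]) auto
  also have "\<dots> = h j k * ((\<Prod>e\<in>mj ` Nj. h (fst e) (snd e)) * (\<Prod>e\<in>mk ` Nk. h (fst e) (snd e)))"
  proof -
    have "(j, k) \<notin> mj ` Nj \<union> mk ` Nk" "mj ` Nj \<inter> mk ` Nk = {}"
      unfolding mj_def mk_def Nj_def Nk_def using \<open>j < k\<close> irr by (auto simp: min_def max_def split: if_splits)
    then show ?thesis
      unfolding edges_incident_pair[OF sg jk, folded mj_def mk_def Nj_def Nk_def]
      using fin by (simp add: prod.union_disjoint)
  qed
  also have "(\<Prod>e\<in>mj ` Nj. h (fst e) (snd e)) = (\<Prod>u\<in>Nj. h j u)"
  proof -
    have "inj_on mj Nj" unfolding inj_on_def mj_def by (auto simp: min_def max_def split: if_splits)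
    then have "(\<Prod>e\<in>mj ` Nj. h (fst e) (snd e)) = (\<Prod>u\<in>Nj. h (fst (mj u)) (snd (mj u)))"
      by (simp add: prod.reindex)
    also have "\<dots> = (\<Prod>u\<in>Nj. h j u)"
      by (rule prod.cong) (auto simp: mj_def min_def max_def h_sym)
    finally show ?thesis .
  qed
  also have "(\<Prod>e\<in>mk ` Nk. h (fst e) (snd e)) = (\<Prod>u\<in>Nk. h k u)"
  proof -
    have "inj_on mk Nk" unfolding inj_on_def mk_def by (auto simp: min_def max_def split: if_splits)
    then have "(\<Prod>e\<in>mk ` Nk. h (fst e) (snd e)) = (\<Prod>u\<in>Nk. h (fst (mk u)) (snd (mk u)))"
      by (simp add: prod.reindex)
    also have "\<dots> = (\<Prod>u\<in>Nk. h k u)"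
      by (rule prod.cong) (auto simp: mk_def min_def max_def h_sym)
    finally show ?thesis .
  qed
  finally show ?thesis unfolding Nj_def Nk_def by (simp add: mult_ac)
qed

definition edge_cut :: "bool \<Rightarrow> bool \<Rightarrow> real" where
  "edge_cut p q = (1 - spin p * spin q) / 2"

definition cut_phase :: "real \<Rightarrow> bool \<Rightarrow> bool \<Rightarrow> bool \<Rightarrow> bool \<Rightarrow> complex" where
  "cut_phase \<gamma> p q p' q' = exp (- (\<i> * of_real \<gamma>) * of_real (edge_cut p' q' - edge_cut p q))"

lemma cnj_cost_layer_state_mult:
  "cnj (cost_layer_state n adj \<gamma> y) * cost_layer_state n adj \<gamma> y'
   = (1 / 2 ^ n) * (\<Prod>e\<in>edges adj. cut_phase \<gamma> (fst e \<in> y) (snd e \<in> y) (fst e \<in> y') (snd e \<in> y'))"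
proof -
  have "cnj (cost_layer_state n adj \<gamma> y) * cost_layer_state n adj \<gamma> y'
     = (of_real (1 / sqrt (2 ^ n)) * of_real (1 / sqrt (2 ^ n))) *
       exp (- (\<i> * of_real \<gamma>) * of_real (cut_value adj y' - cut_value adj y))"
    unfolding cost_layer_state_def by (simp add: exp_cnj mult_ac exp_add[symmetric] algebra_simps)
  also have "of_real (1 / sqrt (2 ^ n)) * of_real (1 / sqrt (2 ^ n)) = (1 / 2 ^ n :: complex)"
    by (simp flip: of_real_mult)
  also have "cut_value adj y' - cut_value adj y
      = (\<Sum>e\<in>edges adj. edge_cut (fst e \<in> y') (snd e \<in> y') - edge_cut (fst e \<in> y) (snd e \<in> y))"
    unfolding cut_value_def edge_cut_def by (simp add: sum_subtractf)
  also have "exp (- (\<i> * of_real \<gamma>) * of_real \<dots>)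
      = (\<Prod>e\<in>edges adj. cut_phase \<gamma> (fst e \<in> y) (snd e \<in> y) (fst e \<in> y') (snd e \<in> y'))"
    by (cases "finite (edges adj)") (simp_all add: cut_phase_def of_real_sum sum_distrib_left exp_sum)
  finally show ?thesis .
qed

lemma cnj_cost_layer_state_mult_pair:
  assumes sg: "simple_graph n adj" and jk: "(j, k) \<in> edges adj"
    and Y: "Y \<subseteq> {..<n} - {j, k}"
  shows "cnj (cost_layer_state n adj \<gamma> (Y \<union> pair_bits j k a b)) * cost_layer_state n adj \<gamma> (Y \<union> pair_bits j k a' b')
   = (1 / 2 ^ n) * cut_phase \<gamma> a b a' b' * (\<Prod>u\<in>{u. adj j u} - {k}. cut_phase \<gamma> a (u \<in> Y) a' (u \<in> Y))
       * (\<Prod>u\<in>{u. adj k u} - {j}. cut_phase \<gamma> b (u \<in> Y) b' (u \<in> Y))"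
proof -
  define y where "y = Y \<union> pair_bits j k a b"
  define y' where "y' = Y \<union> pair_bits j k a' b'"
  have "j \<noteq> k" using jk by (auto simp: edges_def)
  have far: "p \<notin> {j, k} \<Longrightarrow> (p \<in> y) = (p \<in> Y) \<and> (p \<in> y') = (p \<in> Y)" for p
    unfolding y_def y'_def pair_bits_def by auto
  have near: "(j \<in> y) = a" "(k \<in> y) = b" "(j \<in> y') = a'" "(k \<in> y') = b'"
    unfolding y_def y'_def using pair_bits_mem[OF Y _ _ \<open>j \<noteq> k\<close>] by auto
  have nbr: "(u \<in> y) = (u \<in> Y)" "(u \<in> y') = (u \<in> Y)" if "adj p u" "p \<in> {j, k}" "u \<notin> {j, k} - {p}" for p u
    using that simple_graph_adjD(2)[OF sg] far[of u] by auto
  have nbr_phase: "(\<Prod>u\<in>{u. adj p u} - {q}. cut_phase \<gamma> c (u \<in> y) c' (u \<in> y'))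
      = (\<Prod>u\<in>{u. adj p u} - {q}. cut_phase \<gamma> c (u \<in> Y) c' (u \<in> Y))" if "{p, q} = {j, k}" for p q c c'
    by (rule prod.cong) (use that nbr[of p] in \<open>auto simp: doubleton_eq_iff\<close>)
  have "cnj (cost_layer_state n adj \<gamma> y) * cost_layer_state n adj \<gamma> y'
     = (1 / 2 ^ n) * (cut_phase \<gamma> (j \<in> y) (k \<in> y) (j \<in> y') (k \<in> y') *
          (\<Prod>u\<in>{u. adj j u} - {k}. cut_phase \<gamma> (j \<in> y) (u \<in> y) (j \<in> y') (u \<in> y')) *
          (\<Prod>u\<in>{u. adj k u} - {j}. cut_phase \<gamma> (k \<in> y) (u \<in> y) (k \<in> y') (u \<in> y')))"
    unfolding cnj_cost_layer_state_mult
    by (subst prod_edges_incident_pair[OF sg jk])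
      (simp_all add: cut_phase_def edge_cut_def far mult.commute)
  also have "\<dots> = (1 / 2 ^ n) * cut_phase \<gamma> a b a' b' * (\<Prod>u\<in>{u. adj j u} - {k}. cut_phase \<gamma> a (u \<in> Y) a' (u \<in> Y))
       * (\<Prod>u\<in>{u. adj k u} - {j}. cut_phase \<gamma> b (u \<in> Y) b' (u \<in> Y))"
    unfolding near nbr_phase[of j k, OF refl] nbr_phase[of k j, OF insert_commute] by (simp add: mult_ac)
  finally show ?thesis unfolding y_def y'_def .
qed

section \<open>The contribution of one edge of a 3-regular graph\<close>

lemma regular3_edge_neighbourhood:
  assumes r3: "regular3 n adj" and jk: "(j, k) \<in> edges adj"
  defines "Nj \<equiv> {u. adj j u} - {k}" and "Nk \<equiv> {u. adj k u} - {j}" and "A \<equiv> {..<n} - {j, k}"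
    and "t \<equiv> edge_type adj (j, k)"
  shows "Nj \<subseteq> A" "Nk \<subseteq> A" "card (Nj \<inter> Nk) = t" "card (Nj - Nk) = 2 - t" "card (Nk - Nj) = 2 - t"
    "card (A - (Nj \<union> Nk)) + (6 - t) = n" "t \<le> 2"
proof -
  have sg: "simple_graph n adj" using r3 by (simp add: regular3_def)
  note adjD = simple_graph_adjD[OF sg]
  have "j < k" "adj j k" using jk by (auto simp: edges_def)
  have "j < n" "k < n" using adjD[OF \<open>adj j k\<close>] by auto
  have "card {u. adj p u} = 3" if "p < n" for p using r3 that by (simp add: regular3_def)
  then have cNj: "card Nj = 2" and cNk: "card Nk = 2"
    unfolding Nj_def Nk_def using \<open>j < n\<close> \<open>k < n\<close> \<open>adj j k\<close> adjD(1)[OF \<open>adj j k\<close>]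
    by (simp_all add: card_Diff_singleton)
  have fNj: "finite Nj" and fNk: "finite Nk"
    unfolding Nj_def Nk_def using finite_neighbours[OF sg] by auto
  have "Nj \<inter> Nk = {u. adj j u \<and> adj k u}"
    unfolding Nj_def Nk_def by (auto dest: adjD(2))
  then show t: "card (Nj \<inter> Nk) = t" unfolding t_def edge_type_def by simp
  show "card (Nj - Nk) = 2 - t"
    using card_Diff_subset_Int[of Nj Nk] fNj cNj t by simp
  show "card (Nk - Nj) = 2 - t"
    using card_Diff_subset_Int[of Nk Nj] fNk cNk t by (simp add: Int_commute)
  have "card (Nj \<inter> Nk) \<le> 2" using card_mono[OF fNj, of "Nj \<inter> Nk"] cNj by auto
  then show "t \<le> 2" using t by simp
  show sj: "Nj \<subseteq> A" and sk: "Nk \<subseteq> A"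
    unfolding Nj_def Nk_def A_def by (auto dest: adjD)
  have "card A = n - 2"
    unfolding A_def using \<open>j < k\<close> \<open>k < n\<close> by (subst card_Diff_subset) auto
  moreover have "card (Nj \<union> Nk) + card (Nj \<inter> Nk) = 4"
    using card_Un_Int[OF fNj fNk] cNj cNk by simp
  moreover have "card (A - (Nj \<union> Nk)) = card A - card (Nj \<union> Nk)"
    using sj sk fNj fNk by (intro card_Diff_subset) auto
  moreover have "card (Nj \<union> Nk) \<le> card A"
    using sj sk unfolding A_def by (intro card_mono) auto
  ultimately show "card (A - (Nj \<union> Nk)) + (6 - t) = n"
    using t \<open>card (Nj \<inter> Nk) \<le> 2\<close> \<open>j < k\<close> \<open>k < n\<close> by linarith
qed

definition private_nbr_factor :: "real \<Rightarrow> bool \<Rightarrow> bool \<Rightarrow> complex" where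
  "private_nbr_factor \<gamma> a a' = (\<Sum>p\<in>UNIV. cut_phase \<gamma> a p a' p)"

definition common_nbr_factor :: "real \<Rightarrow> bool \<Rightarrow> bool \<Rightarrow> bool \<Rightarrow> bool \<Rightarrow> complex" where
  "common_nbr_factor \<gamma> a a' b b' = (\<Sum>p\<in>UNIV. cut_phase \<gamma> a p a' p * cut_phase \<gamma> b p b' p)"

text \<open>The light cone of an edge of type t consists of 6 - t qubits: the endpoints and their
  4 - t further neighbours.\<close>

definition pair_expectation :: "(bool \<Rightarrow> complex) \<Rightarrow> (bool \<Rightarrow> complex) \<Rightarrow> real \<Rightarrow> real \<Rightarrow> nat \<Rightarrow> complex" where
  "pair_expectation \<omega>j \<omega>k \<gamma> \<beta> t = (\<Sum>a\<in>UNIV. \<Sum>b\<in>UNIV. \<Sum>a'\<in>UNIV. \<Sum>b'\<in>UNIV.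
      rx_kernel \<omega>j \<beta> a a' * rx_kernel \<omega>k \<beta> b b' *
      (cut_phase \<gamma> a b a' b' * common_nbr_factor \<gamma> a a' b b' ^ t
        * private_nbr_factor \<gamma> a a' ^ (2 - t) * private_nbr_factor \<gamma> b b' ^ (2 - t) / 2 ^ (6 - t)))"

lemma sum_Pow_cost_layer_pair:
  assumes r3: "regular3 n adj" and jk: "(j, k) \<in> edges adj"
  defines "A \<equiv> {..<n} - {j, k}" and "t \<equiv> edge_type adj (j, k)"
  shows "(\<Sum>Y\<in>Pow A. cnj (cost_layer_state n adj \<gamma> (Y \<union> pair_bits j k a b)) * cost_layer_state n adj \<gamma> (Y \<union> pair_bits j k a' b'))
     = cut_phase \<gamma> a b a' b' * common_nbr_factor \<gamma> a a' b b' ^ t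
        * private_nbr_factor \<gamma> a a' ^ (2 - t) * private_nbr_factor \<gamma> b b' ^ (2 - t) / 2 ^ (6 - t)"
proof -
  define Nj where "Nj = {u. adj j u} - {k}"
  define Nk where "Nk = {u. adj k u} - {j}"
  note card = regular3_edge_neighbourhood[OF r3 jk, folded Nj_def Nk_def A_def t_def]
  have sg: "simple_graph n adj" using r3 by (simp add: regular3_def)
  have "finite A" unfolding A_def by simp
  have "(\<Sum>Y\<in>Pow A. cnj (cost_layer_state n adj \<gamma> (Y \<union> pair_bits j k a b)) * cost_layer_state n adj \<gamma> (Y \<union> pair_bits j k a' b'))
     = (1 / 2 ^ n) * cut_phase \<gamma> a b a' b'
       * (\<Sum>Y\<in>Pow A. (\<Prod>u\<in>Nj. cut_phase \<gamma> a (u \<in> Y) a' (u \<in> Y)) * (\<Prod>u\<in>Nk. cut_phase \<gamma> b (u \<in> Y) b' (u \<in> Y)))"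
    unfolding sum_distrib_left
  proof (rule sum.cong)
    fix Y assume "Y \<in> Pow A"
    then have Y: "Y \<subseteq> {..<n} - {j, k}" unfolding A_def by auto
    show "cnj (cost_layer_state n adj \<gamma> (Y \<union> pair_bits j k a b)) * cost_layer_state n adj \<gamma> (Y \<union> pair_bits j k a' b')
      = 1 / 2 ^ n * cut_phase \<gamma> a b a' b'
        * ((\<Prod>u\<in>Nj. cut_phase \<gamma> a (u \<in> Y) a' (u \<in> Y)) * (\<Prod>u\<in>Nk. cut_phase \<gamma> b (u \<in> Y) b' (u \<in> Y)))"
      unfolding cnj_cost_layer_state_mult_pair[OF sg jk Y] Nj_def Nk_def by (simp only: mult.assoc)
  qed simp
  also have "\<dots> = (1 / 2 ^ n) * cut_phase \<gamma> a b a' b' * (common_nbr_factor \<gamma> a a' b b' ^ t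
      * private_nbr_factor \<gamma> a a' ^ (2 - t) * private_nbr_factor \<gamma> b b' ^ (2 - t) * 2 ^ card (A - (Nj \<union> Nk)))"
    using sum_Pow_prod_prod[OF \<open>finite A\<close> card(1,2), of "\<lambda>p. cut_phase \<gamma> a p a' p" "\<lambda>p. cut_phase \<gamma> b p b' p"] card(3-5)
    by (simp add: common_nbr_factor_def private_nbr_factor_def UNIV_bool add.commute)
  also have "(2::complex) ^ n = 2 ^ card (A - (Nj \<union> Nk)) * 2 ^ (6 - t)"
    using card(6) by (metis power_add)
  finally show ?thesis by (simp add: field_simps)
qed

lemma edge_expectation:
  assumes r3: "regular3 n adj" and jk: "(j, k) \<in> edges adj"
  shows "(\<Sum>x\<in>basis n. \<omega>j (j \<in> x) * \<omega>k (k \<in> x) * (cnj (qaoa_state n adj \<gamma> \<beta> x) * qaoa_state n adj \<gamma> \<beta> x))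
     = pair_expectation \<omega>j \<omega>k \<gamma> \<beta> (edge_type adj (j, k))"
proof -
  have sg: "simple_graph n adj" using r3 by (simp add: regular3_def)
  have "adj j k" "j \<noteq> k" using jk by (auto simp: edges_def)
  then have "j < n" "k < n" using simple_graph_adjD[OF sg] by auto
  have weight: "\<omega>j (j \<in> x) * \<omega>k (k \<in> x) = (\<Prod>l<n. pair_weight j k \<omega>j \<omega>k l (l \<in> x))" for x
    unfolding prod_lessThan_pair[OF \<open>j < n\<close> \<open>k < n\<close> \<open>j \<noteq> k\<close>]
    using \<open>j \<noteq> k\<close> by (simp add: pair_weight_def)
  show ?thesis
    unfolding weight weighted_expectation_expand light_cone_reduction[OF \<open>j < n\<close> \<open>k < n\<close> \<open>j \<noteq> k\<close>]
      sum_Pow_cost_layer_pair[OF r3 jk] pair_expectation_def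
    by simp
qed

definition edge_cost :: "real \<Rightarrow> real \<Rightarrow> nat \<Rightarrow> complex" where
  "edge_cost \<gamma> \<beta> t = (pair_expectation (\<lambda>_. 1) (\<lambda>_. 1) \<gamma> \<beta> t
     - pair_expectation (\<lambda>b. of_real (spin b)) (\<lambda>b. of_real (spin b)) \<gamma> \<beta> t) / 2"

lemma F1_as_cut_expectation:
  "F1 n adj \<gamma> \<beta> = (\<Sum>x\<in>basis n. of_real (cut_value adj x) * (cnj (qaoa_state n adj \<gamma> \<beta> x) * qaoa_state n adj \<gamma> \<beta> x))"
  unfolding F1_def Let_def by (rule sum.cong) (simp_all add: cost_op_apply mult_ac)

lemma F1_real: "F1 n adj \<gamma> \<beta> = of_real (Re (F1 n adj \<gamma> \<beta>))"
proof -
  have "cnj z * z = of_real ((cmod z)\<^sup>2)" for z :: complex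
    using complex_norm_square[of z] by (simp add: mult.commute)
  then show ?thesis
    unfolding F1_as_cut_expectation by (simp add: of_real_sum)
qed

lemma F1_eq_sum_edge_cost:
  assumes r3: "regular3 n adj"
  shows "F1 n adj \<gamma> \<beta> = (\<Sum>e\<in>edges adj. edge_cost \<gamma> \<beta> (edge_type adj e))"
proof -
  define \<psi> where "\<psi> = qaoa_state n adj \<gamma> \<beta>"
  define s where "s b = complex_of_real (spin b)" for b
  have "F1 n adj \<gamma> \<beta> = (\<Sum>x\<in>basis n. \<Sum>e\<in>edges adj.
      (cnj (\<psi> x) * \<psi> x - s (fst e \<in> x) * s (snd e \<in> x) * (cnj (\<psi> x) * \<psi> x)) / 2)"
    unfolding F1_as_cut_expectation cut_value_def of_real_sum sum_distrib_right \<psi>_def[symmetric]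
    by (intro sum.cong refl) (simp add: s_def field_simps)
  also have "\<dots> = (\<Sum>e\<in>edges adj. \<Sum>x\<in>basis n.
      (cnj (\<psi> x) * \<psi> x - s (fst e \<in> x) * s (snd e \<in> x) * (cnj (\<psi> x) * \<psi> x)) / 2)"
    by (rule sum.swap)
  also have "\<dots> = (\<Sum>e\<in>edges adj. edge_cost \<gamma> \<beta> (edge_type adj e))"
  proof (rule sum.cong)
    fix e assume "e \<in> edges adj"
    then obtain j k where e: "e = (j, k)" and jk: "(j, k) \<in> edges adj" by (cases e) auto
    note one = edge_expectation[OF r3 jk, where \<omega>j = "\<lambda>_. 1" and \<omega>k = "\<lambda>_. 1", simplified]
    note spin = edge_expectation[OF r3 jk, where \<omega>j = s and \<omega>k = s]
    show "(\<Sum>x\<in>basis n. (cnj (\<psi> x) * \<psi> x - s (fst e \<in> x) * s (snd e \<in> x) * (cnj (\<psi> x) * \<psi> x)) / 2)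
      = edge_cost \<gamma> \<beta> (edge_type adj e)"
      unfolding e fst_conv snd_conv sum_divide_distrib[symmetric] sum_subtractf \<psi>_def one spin
      by (simp add: edge_cost_def s_def[abs_def])
  qed simp
  finally show ?thesis .
qed

lemma sum_by_value_fractions:
  fixes f :: "nat \<Rightarrow> real"
  assumes "finite E" and "\<And>e. e \<in> E \<Longrightarrow> ty e \<le> 2"
  shows "(\<Sum>e\<in>E. f (ty e)) = real (card E) *
    (real (card {e\<in>E. ty e = 0}) / real (card E) * f 0 + real (card {e\<in>E. ty e = 1}) / real (card E) * f 1
      + real (card {e\<in>E. ty e = 2}) / real (card E) * f 2)"
proof (cases "E = {}")
  case False
  have "(\<Sum>e\<in>E. f (ty e)) = (\<Sum>e\<in>E. \<Sum>t\<in>{0,1,2::nat}. if ty e = t then f t else 0)"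
  proof (rule sum.cong)
    fix e assume "e \<in> E"
    then have "ty e \<in> {0, 1, 2}" using assms(2)[of e] by auto
    then show "f (ty e) = (\<Sum>t\<in>{0,1,2::nat}. if ty e = t then f t else 0)" by auto
  qed simp
  also have "\<dots> = (\<Sum>t\<in>{0,1,2::nat}. real (card {e\<in>E. ty e = t}) * f t)"
    using assms(1) by (subst sum.swap) (simp add: sum.If_cases Int_def)
  finally show ?thesis
    using False assms(1) by (simp add: field_simps)
qed simp

lemma F1_by_edge_types:
  assumes r3: "regular3 n adj"
  shows "F1 n adj \<gamma> \<beta> = of_real (real (card (edges adj)) *
    (edge_frac adj 0 * Re (edge_cost \<gamma> \<beta> 0) + edge_frac adj 1 * Re (edge_cost \<gamma> \<beta> 1)
      + edge_frac adj 2 * Re (edge_cost \<gamma> \<beta> 2)))"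
proof -
  have "simple_graph n adj" using r3 by (simp add: regular3_def)
  have "edge_type adj e \<le> 2" if "e \<in> edges adj" for e
    using that regular3_edge_neighbourhood(7)[OF r3, of "fst e" "snd e"] by simp
  then have "(\<Sum>e\<in>edges adj. Re (edge_cost \<gamma> \<beta> (edge_type adj e))) = real (card (edges adj)) *
    (edge_frac adj 0 * Re (edge_cost \<gamma> \<beta> 0) + edge_frac adj 1 * Re (edge_cost \<gamma> \<beta> 1)
      + edge_frac adj 2 * Re (edge_cost \<gamma> \<beta> 2))"
    unfolding edge_frac_def by (rule sum_by_value_fractions[OF finite_edges[OF \<open>simple_graph n adj\<close>]])
  moreover have "F1 n adj \<gamma> \<beta> = of_real (\<Sum>e\<in>edges adj. Re (edge_cost \<gamma> \<beta> (edge_type adj e)))"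
    using F1_real[of n adj \<gamma> \<beta>] unfolding F1_eq_sum_edge_cost[OF r3] by simp
  ultimately show ?thesis by simp
qed

theorem mainTheorem2:
  "\<exists>F0 F1' F2 :: real \<Rightarrow> real \<Rightarrow> real.
     \<forall>n adj \<gamma> \<beta>. regular3 n adj \<longrightarrow>
       F1 n adj \<gamma> \<beta> =
         complex_of_real (real (card (edges adj)) *
           (edge_frac adj 0 * F0 \<gamma> \<beta> + edge_frac adj 1 * F1' \<gamma> \<beta> + edge_frac adj 2 * F2 \<gamma> \<beta>))"
  by (intro exI allI impI) (rule F1_by_edge_types)

end
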